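(* Let $\{\mathbb{P}_{s,t}\in\mathcal{Q}:0\le s\le t\}$ be a quadratic harness with parameters $\eta,\theta,\sigma,\tau,\gamma$, and let $\mathbb{A}_t$ ($t>0$) be its infinitesimal generator. For $t>0$ put $$\mathbb{H}_t=\mathbb{A}_t\mathbb{F}-\mathbb{F}\mathbb{A}_t,\qquad \mathbb{T}_t=\mathbb{F}-t\mathbb{H}_t .$$ Then $$\mathbb{H}_t\mathbb{T}_t-\gamma\,\mathbb{T}_t\mathbb{H}_t=\mathbb{E}+\theta\mathbb{H}_t+\eta\mathbb{T}_t+\tau\mathbb{H}_t^{2}+\sigma\mathbb{T}_t^{2}.$$
   Context: $\mathcal{Q}$ denotes the real linear space of all infinite sequences $\mathbb{P}=(p_0,p_1,p_2,\dots)$ of real polynomials in one variable $x$, equipped with the product $\mathbb{P}\mathbb{Q}=\mathbb{R}=(r_0,r_1,\dots)$, where for $\mathbb{Q}=(q_0,q_1,\dots)$ one sets $r_k(x)=\sum_{j=0}^{\deg q_k}[q_k]_j\,p_j(x)$, and $[q]_j$ denotes the coefficient of $x^j$ in $q$. (Equivalently, identifying a linear map $\mathsf{P}$ of the polynomial space with the sequence $(\mathsf{P}(1),\mathsf{P}(x),\mathsf{P}(x^2),\dots)$, the product corresponds to composition $\mathsf{P}\circ\mathsf{Q}$.) Powers are taken with respect to this product. Special elements: $\mathbb{E}=(1,x,x^2,\dots)$ (the identity), $\mathbb{F}=(x,x^2,x^3,\dots)$, $\mathbb{D}=(0,1,x,x^2,\dots)$. A polynomial process is a family $\{\mathbb{P}_{s,t}\in\mathcal{Q}:0\le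 s\le t\}$ such that: (i) for all $0\le s\le t$ and $n\ge0$ the $n$-th component of $\mathbb{P}_{s,t}$ is a polynomial of degree exactly $n$; (ii) $\mathbb{P}_{s,t}(\mathbb{E}-\mathbb{F}\mathbb{D})=\mathbb{E}-\mathbb{F}\mathbb{D}$; (iii) $\mathbb{P}_{s,t}\mathbb{P}_{t,u}=\mathbb{P}_{s,u}$ for $0\le s\le t\le u$. Given real numbers $\eta,\theta,\sigma,\tau,\gamma$, a polynomial process is a quadratic harness with parameters $\eta,\theta,\sigma,\tau,\gamma$ if: (a) $\mathbb{P}_{s,t}(\mathbb{F}\mathbb{D}-\mathbb{F}^2\mathbb{D}^2)=\mathbb{F}\mathbb{D}-\mathbb{F}^2\mathbb{D}^2$ for all $0\le s\le t$; (b) there is $\mathbb{X}\in\mathcal{Q}$ with $\mathbb{P}_{0,t}\mathbb{F}=(\mathbb{F}+t\mathbb{X})\mathbb{P}_{0,t}$ for all $t\ge0$; (c) this $\mathbb{X}$ satisfies $\mathbb{X}\mathbb{F}-\gamma\mathbb{F}\mathbb{X}=\mathbb{E}+\eta\mathbb{F}+\theta\mathbb{X}+\sigma\mathbb{F}^2+\tau\mathbb{X}^2$. The infinitesimal generator is $\mathbb{A}_t=\lim_{h\to0^+}\frac1h(\mathbb{P}_{t-h,t}-\mathbb{E})\in\mathcal{Q}$, $t>0$, the limit taken coefficientwise in each component (it exists for such processes). *)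

theory Defs
  imports Complex_Main "HOL-Computational_Algebra.Polynomial"
begin

type_synonym qseq = "nat \<Rightarrow> real poly"

definition qmul :: "qseq \<Rightarrow> qseq \<Rightarrow> qseq" (infixl "\<cdot>\<^sub>Q" 70) where
  "qmul P Q = (\<lambda>k. \<Sum>j\<le>degree (Q k). smult (coeff (Q k) j) (P j))"

definition qadd :: "qseq \<Rightarrow> qseq \<Rightarrow> qseq" (infixl "+\<^sub>Q" 65) where
  "qadd P Q = (\<lambda>k. P k + Q k)"

definition qsub :: "qseq \<Rightarrow> qseq \<Rightarrow> qseq" (infixl "-\<^sub>Q" 65) where
  "qsub P Q = (\<lambda>k. P k - Q k)"

definition qscale :: "real \<Rightarrow> qseq \<Rightarrow> qseq" (infixr "*\<^sub>Q" 75) where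
  "qscale c P = (\<lambda>k. smult c (P k))"

definition qE :: qseq where "qE = (\<lambda>n. monom 1 n)"
definition qF :: qseq where "qF = (\<lambda>n. monom 1 (Suc n))"
definition qD :: qseq where "qD = (\<lambda>n. if n = 0 then 0 else monom 1 (n - 1))"

definition polynomial_process :: "(real \<Rightarrow> real \<Rightarrow> qseq) \<Rightarrow> bool" where
  "polynomial_process P \<longleftrightarrow>
     (\<forall>s t n. 0 \<le> s \<and> s \<le> t \<longrightarrow> degree (P s t n) = n \<and> coeff (P s t n) n \<noteq> 0) \<and>
     (\<forall>s t. 0 \<le> s \<and> s \<le> t \<longrightarrow> P s t \<cdot>\<^sub>Q (qE -\<^sub>Q qF \<cdot>\<^sub>Q qD) = qE -\<^sub>Q qF \<cdot>\<^sub>Q qD) \<and>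
     (\<forall>s t u. 0 \<le> s \<and> s \<le> t \<and> t \<le> u \<longrightarrow> P s t \<cdot>\<^sub>Q P t u = P s u)"

definition quadratic_harness ::
  "(real \<Rightarrow> real \<Rightarrow> qseq) \<Rightarrow> real \<Rightarrow> real \<Rightarrow> real \<Rightarrow> real \<Rightarrow> real \<Rightarrow> bool" where
  "quadratic_harness P \<eta> \<theta> \<sigma> \<tau> \<gamma> \<longleftrightarrow>
     polynomial_process P \<and>
     (\<forall>s t. 0 \<le> s \<and> s \<le> t \<longrightarrow>
        P s t \<cdot>\<^sub>Q (qF \<cdot>\<^sub>Q qD -\<^sub>Q qF \<cdot>\<^sub>Q qF \<cdot>\<^sub>Q qD \<cdot>\<^sub>Q qD) = qF \<cdot>\<^sub>Q qD -\<^sub>Q qF \<cdot>\<^sub>Q qF \<cdot>\<^sub>Q qD \<cdot>\<^sub>Q qD) \<and>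
     (\<exists>X. (\<forall>t\<ge>0. P 0 t \<cdot>\<^sub>Q qF = (qF +\<^sub>Q t *\<^sub>Q X) \<cdot>\<^sub>Q P 0 t) \<and>
          X \<cdot>\<^sub>Q qF -\<^sub>Q \<gamma> *\<^sub>Q (qF \<cdot>\<^sub>Q X) =
            qE +\<^sub>Q \<eta> *\<^sub>Q qF +\<^sub>Q \<theta> *\<^sub>Q X +\<^sub>Q \<sigma> *\<^sub>Q (qF \<cdot>\<^sub>Q qF) +\<^sub>Q \<tau> *\<^sub>Q (X \<cdot>\<^sub>Q X))"

definition is_generator :: "(real \<Rightarrow> real \<Rightarrow> qseq) \<Rightarrow> (real \<Rightarrow> qseq) \<Rightarrow> bool" where
  "is_generator P A \<longleftrightarrow>
     (\<forall>t>0. \<forall>n j. ((\<lambda>h. coeff (P (t - h) t n - qE n) j / h) \<longlongrightarrow> coeff (A t n) j) (at_right 0))"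

end

theory Submission
  imports Defs
begin

text \<open>
  Viewing sequences as linear maps of the polynomial space, the product is composition.
  For \<open>0 < h < t\<close> the factorisation \<open>P(0,t) = P(0,t-h) P(t-h,t)\<close> and the intertwining
  relations \<open>P(0,s) F = (F + s X) P(0,s)\<close> for \<open>s = t\<close> and \<open>s = t - h\<close> give exactly
  \<open>P(0,t-h) [(P(t-h,t) - E)/h, F] = X P(0,t)\<close>. Letting \<open>h \<rightarrow> 0\<close> yields
  \<open>P(0,t) H = X P(0,t)\<close>, hence \<open>P(0,t) T = F P(0,t)\<close>: conjugation by \<open>P(0,t)\<close> carries
  \<open>(H, T)\<close> to \<open>(X, F)\<close>, and the quadratic relation of \<open>(X, F)\<close> pulls back because
  \<open>P(0,t)\<close>, whose components have exact degrees, is injective.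
  The limit needs \<open>P(0,t-h) \<rightarrow> P(0,t)\<close>, which follows from \<open>P(t-h,t) \<rightarrow> E\<close> by solving
  the triangular system \<open>P(0,t-h) P(t-h,t) = P(0,t)\<close> for \<open>P(0,t-h)\<close>.
\<close>

section \<open>The algebra of polynomial sequences\<close>

definition qapply :: "qseq \<Rightarrow> real poly \<Rightarrow> real poly" where
  "qapply P p = (\<Sum>j\<le>degree p. smult (coeff p j) (P j))"

definition graded :: "qseq \<Rightarrow> bool" where
  "graded Q \<longleftrightarrow> (\<forall>n. degree (Q n) = n \<and> coeff (Q n) n \<noteq> 0)"

definition qF_commutator :: "qseq \<Rightarrow> qseq" where
  "qF_commutator Y = Y \<cdot>\<^sub>Q qF -\<^sub>Q qF \<cdot>\<^sub>Q Y"

lemma smult_sum_right: "smult c (\<Sum>i\<in>S. f i) = (\<Sum>i\<in>S. smult c (f i))"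
  by (induct S rule: infinite_finite_induct) (auto simp: smult_add_right)

lemma qmul_apply: "(P \<cdot>\<^sub>Q Q) k = qapply P (Q k)"
  by (simp add: qmul_def qapply_def)

lemma qapply_degree_le:
  assumes "degree p \<le> N"
  shows "qapply P p = (\<Sum>j\<le>N. smult (coeff p j) (P j))"
proof -
  have "(\<Sum>j\<le>N. smult (coeff p j) (P j)) = (\<Sum>j\<le>degree p. smult (coeff p j) (P j))"
    by (rule sum.mono_neutral_right) (use assms in \<open>auto simp: coeff_eq_0\<close>)
  then show ?thesis by (simp add: qapply_def)
qed

lemma coeff_qapply_degree_le:
  assumes "degree p \<le> N"
  shows "coeff (qapply P p) k = (\<Sum>j\<le>N. coeff p j * coeff (P j) k)"
  by (simp add: qapply_degree_le[OF assms] coeff_sum)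

lemma qapply_add: "qapply P (p + q) = qapply P p + qapply P q"
proof -
  let ?N = "max (degree p) (degree q)"
  have "degree (p + q) \<le> ?N" by (rule degree_add_le) auto
  then show ?thesis
    by (simp add: qapply_degree_le[of _ ?N] sum.distrib smult_add_left)
qed

lemma qapply_smult: "qapply P (smult c p) = smult c (qapply P p)"
  by (simp add: qapply_degree_le[OF degree_smult_le] qapply_def smult_sum_right)

lemma qapply_diff: "qapply P (p - q) = qapply P p - qapply P q"
  by (metis qapply_add diff_add_cancel eq_diff_eq)

lemma qapply_sum: "qapply P (\<Sum>j\<in>S. f j) = (\<Sum>j\<in>S. qapply P (f j))"
proof (induct S rule: infinite_finite_induct)
qed (auto simp: qapply_add, auto simp: qapply_def)

lemma qapply_monom: "qapply P (monom 1 n) = P n"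
proof -
  have "qapply P (monom 1 n) = (\<Sum>j\<le>n. if n = j then P j else 0)"
    unfolding qapply_def by (rule sum.cong) (auto simp: coeff_monom degree_monom_eq)
  then show ?thesis by simp
qed

lemma qapply_qE: "qapply qE p = p"
  by (simp add: qapply_def qE_def smult_monom poly_as_sum_of_monoms)

lemma qapply_qF: "qapply qF p = monom 1 1 * p"
proof -
  have "qapply qF p = (\<Sum>j\<le>degree p. monom 1 1 * monom (coeff p j) j)"
    by (simp add: qapply_def qF_def smult_monom mult_monom)
  also have "\<dots> = monom 1 1 * p"
    by (simp add: sum_distrib_left[symmetric] poly_as_sum_of_monoms)
  finally show ?thesis .
qed

lemma qapply_qmul: "qapply (P \<cdot>\<^sub>Q Q) p = qapply P (qapply Q p)"
  by (simp add: qapply_def[of "P \<cdot>\<^sub>Q Q"] qapply_def[of Q] qmul_apply qapply_sum qapply_smult)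

lemma qmul_assoc: "(P \<cdot>\<^sub>Q Q) \<cdot>\<^sub>Q R = P \<cdot>\<^sub>Q (Q \<cdot>\<^sub>Q R)"
  by (simp add: fun_eq_iff qmul_apply qapply_qmul)

lemma qmul_add_left: "(P +\<^sub>Q Q) \<cdot>\<^sub>Q R = P \<cdot>\<^sub>Q R +\<^sub>Q Q \<cdot>\<^sub>Q R"
  by (simp add: fun_eq_iff qmul_apply qadd_def qapply_def sum.distrib smult_add_right)

lemma qmul_sub_left: "(P -\<^sub>Q Q) \<cdot>\<^sub>Q R = P \<cdot>\<^sub>Q R -\<^sub>Q Q \<cdot>\<^sub>Q R"
  by (simp add: fun_eq_iff qmul_apply qsub_def qapply_def sum_subtractf smult_diff_right)

lemma qmul_scale_left: "(c *\<^sub>Q P) \<cdot>\<^sub>Q R = c *\<^sub>Q (P \<cdot>\<^sub>Q R)"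
  by (simp add: fun_eq_iff qmul_apply qscale_def qapply_def smult_sum_right mult.commute)

lemma qmul_add_right: "P \<cdot>\<^sub>Q (Q +\<^sub>Q R) = P \<cdot>\<^sub>Q Q +\<^sub>Q P \<cdot>\<^sub>Q R"
  by (simp add: fun_eq_iff qmul_apply qadd_def qapply_add)

lemma qmul_sub_right: "P \<cdot>\<^sub>Q (Q -\<^sub>Q R) = P \<cdot>\<^sub>Q Q -\<^sub>Q P \<cdot>\<^sub>Q R"
  by (simp add: fun_eq_iff qmul_apply qsub_def qapply_diff)

lemma qmul_scale_right: "P \<cdot>\<^sub>Q (c *\<^sub>Q R) = c *\<^sub>Q (P \<cdot>\<^sub>Q R)"
  by (simp add: fun_eq_iff qmul_apply qscale_def qapply_smult)

lemma qmul_qE_left: "qE \<cdot>\<^sub>Q P = P"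
  by (simp add: fun_eq_iff qmul_apply qapply_qE)

lemma qmul_qE_right: "P \<cdot>\<^sub>Q qE = P"
  by (simp add: fun_eq_iff qmul_apply qE_def qapply_monom)

lemmas qmul_distribs =
  qmul_add_left qmul_sub_left qmul_scale_left qmul_add_right qmul_sub_right qmul_scale_right

lemma qF_commutator_apply: "qF_commutator Y n = Y (Suc n) - monom 1 1 * Y n"
  by (simp add: qF_commutator_def qsub_def qmul_apply qapply_qF) (simp add: qF_def qapply_monom)

lemma degree_qF_commutator_le:
  assumes "degree (Y n) \<le> n" "degree (Y (Suc n)) \<le> Suc n"
  shows "degree (qF_commutator Y n) \<le> Suc n"
proof -
  have "degree (monom (1::real) 1 * Y n) \<le> Suc n"
    using degree_mult_le[of "monom (1::real) 1" "Y n"] assms(1) by (simp add: degree_monom_eq)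
  then show ?thesis
    unfolding qF_commutator_apply using assms(2) by (intro degree_diff_le)
qed

lemma graded_qapply_eq_0:
  assumes "graded Q" "qapply Q p = 0"
  shows "p = 0"
proof (rule ccontr)
  assume "p \<noteq> 0"
  define d where "d = degree p"
  have "coeff (qapply Q p) d = (\<Sum>j\<le>d. coeff p j * coeff (Q j) d)"
    by (simp add: qapply_def d_def coeff_sum)
  also have "\<dots> = coeff p d * coeff (Q d) d"
  proof (rule sum.mono_neutral_left[symmetric, of _ "{d}", simplified])
    show "\<forall>i\<in>{..d} - {d}. coeff p i * coeff (Q i) d = 0"
      using assms(1) by (auto intro!: coeff_eq_0 simp: graded_def le_less)
  qed auto
  finally show False
    using \<open>p \<noteq> 0\<close> assms unfolding graded_def by (simp add: d_def)
qed

lemma graded_qmul_cancel_left: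
  assumes "graded Q" "Q \<cdot>\<^sub>Q U = Q \<cdot>\<^sub>Q V"
  shows "U = V"
proof
  fix n
  have "qapply Q (U n - V n) = 0"
    using fun_cong[OF assms(2), of n] by (simp add: qapply_diff qmul_apply)
  then have "U n - V n = 0" by (rule graded_qapply_eq_0[OF assms(1)])
  then show "U n = V n" by simp
qed

section \<open>Coefficientwise convergence\<close>

definition coeffwise_tendsto :: "('a \<Rightarrow> real poly) \<Rightarrow> real poly \<Rightarrow> 'a filter \<Rightarrow> bool" where
  "coeffwise_tendsto f L F \<longleftrightarrow> (\<forall>k. ((\<lambda>x. coeff (f x) k) \<longlongrightarrow> coeff L k) F)"

lemma coeffwise_tendsto_cong_eventually:
  assumes "coeffwise_tendsto f L F" "eventually (\<lambda>x. f x = g x) F"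
  shows "coeffwise_tendsto g L F"
  unfolding coeffwise_tendsto_def
proof
  fix k
  have "eventually (\<lambda>x. coeff (f x) k = coeff (g x) k) F"
    using assms(2) by (rule eventually_mono) simp
  then show "((\<lambda>x. coeff (g x) k) \<longlongrightarrow> coeff L k) F"
    using assms(1) unfolding coeffwise_tendsto_def by (blast intro: Lim_transform_eventually)
qed

lemma coeffwise_tendsto_const: "coeffwise_tendsto (\<lambda>x. c) c F"
  by (simp add: coeffwise_tendsto_def)

lemma coeffwise_tendsto_unique:
  assumes "F \<noteq> bot" "coeffwise_tendsto f L F" "coeffwise_tendsto f M F"
  shows "L = M"
  using assms unfolding coeffwise_tendsto_def by (metis poly_eqI tendsto_unique)

lemma coeffwise_tendsto_eventually_const:
  assumes "F \<noteq> bot" "coeffwise_tendsto f L F" "eventually (\<lambda>x. f x = c) F"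
  shows "L = c"
  using assms coeffwise_tendsto_unique coeffwise_tendsto_cong_eventually[OF coeffwise_tendsto_const]
  by (metis (mono_tags, lifting) eventually_mono)

lemma coeffwise_tendsto_degree_le:
  assumes "F \<noteq> bot" "coeffwise_tendsto f L F" "eventually (\<lambda>x. degree (f x) \<le> N) F"
  shows "degree L \<le> N"
proof (rule degree_le, intro allI impI)
  fix k assume "N < k"
  then have "eventually (\<lambda>x. coeff (f x) k = 0) F"
    using assms(3) by (auto elim!: eventually_mono intro: coeff_eq_0)
  then have "((\<lambda>x. coeff (f x) k) \<longlongrightarrow> 0) F"
    by (rule tendsto_eventually)
  moreover have "((\<lambda>x. coeff (f x) k) \<longlongrightarrow> coeff L k) F"
    using assms(2) by (simp add: coeffwise_tendsto_def)
  ultimately show "coeff L k = 0"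
    using assms(1) by (simp add: tendsto_unique)
qed

lemma coeffwise_tendsto_diff:
  assumes "coeffwise_tendsto f L F" "coeffwise_tendsto g M F"
  shows "coeffwise_tendsto (\<lambda>x. f x - g x) (L - M) F"
  using assms unfolding coeffwise_tendsto_def coeff_diff by (metis tendsto_diff)

lemma coeffwise_tendsto_qF_commutator:
  assumes "\<And>n. coeffwise_tendsto (\<lambda>x. Y x n) (Y0 n) F"
  shows "coeffwise_tendsto (\<lambda>x. qF_commutator (Y x) n) (qF_commutator Y0 n) F"
proof -
  have "coeffwise_tendsto (\<lambda>x. monom 1 1 * Y x n) (monom 1 1 * Y0 n) F"
    using assms[of n] unfolding coeffwise_tendsto_def
    by (auto simp: coeff_monom_mult split: nat.split)
  then show ?thesis
    unfolding qF_commutator_apply by (intro coeffwise_tendsto_diff assms)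
qed

lemma coeffwise_tendsto_qapply:
  assumes "F \<noteq> bot" "\<And>j. coeffwise_tendsto (\<lambda>x. R x j) (Q j) F" "coeffwise_tendsto f L F"
    and "eventually (\<lambda>x. degree (f x) \<le> N) F"
  shows "coeffwise_tendsto (\<lambda>x. qapply (R x) (f x)) (qapply Q L) F"
  unfolding coeffwise_tendsto_def
proof
  fix k
  have "((\<lambda>x. \<Sum>j\<le>N. coeff (f x) j * coeff (R x j) k) \<longlongrightarrow> (\<Sum>j\<le>N. coeff L j * coeff (Q j) k)) F"
    using assms(2,3) unfolding coeffwise_tendsto_def by (intro tendsto_sum tendsto_mult) auto
  moreover have "eventually (\<lambda>x. (\<Sum>j\<le>N. coeff (f x) j * coeff (R x j) k)
      = coeff (qapply (R x) (f x)) k) F"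
    using assms(4) by (rule eventually_mono) (simp add: coeff_qapply_degree_le)
  ultimately show "((\<lambda>x. coeff (qapply (R x) (f x)) k) \<longlongrightarrow> coeff (qapply Q L) k) F"
    using coeff_qapply_degree_le[OF coeffwise_tendsto_degree_le[OF assms(1,3,4)]]
    by (simp add: Lim_transform_eventually)
qed

lemma coeffwise_tendsto_of_difference_quotient:
  assumes "coeffwise_tendsto (\<lambda>h. smult (1/h) (f h - c)) L (at_right 0)"
  shows "coeffwise_tendsto f c (at_right 0)"
  unfolding coeffwise_tendsto_def
proof
  fix k
  have "((\<lambda>h. coeff c k + h * coeff (smult (1/h) (f h - c)) k) \<longlongrightarrow> coeff c k + 0 * coeff L k)
      (at_right 0)"
    using assms unfolding coeffwise_tendsto_def
    by (intro tendsto_add tendsto_mult tendsto_const tendsto_ident_at) auto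
  moreover have "eventually (\<lambda>h. coeff c k + h * coeff (smult (1/h) (f h - c)) k = coeff (f h) k)
      (at_right 0)"
    unfolding eventually_at_right_field by (rule exI[of _ 1]) auto
  ultimately show "((\<lambda>h. coeff (f h) k) \<longlongrightarrow> coeff c k) (at_right 0)"
    by (simp add: Lim_transform_eventually)
qed

text \<open>
  Component \<open>j\<close> of \<open>R \<cdot> B = Q\<close> expresses \<open>R j\<close> through \<open>R i\<close>, \<open>i < j\<close>, after division by
  the leading coefficient of \<open>B j\<close>, which tends to \<open>1\<close>; induct on \<open>j\<close>.
\<close>
lemma coeffwise_tendsto_graded_inverse:
  assumes B: "\<And>n. coeffwise_tendsto (\<lambda>x. B x n) (qE n) F"
    and RB: "eventually (\<lambda>x. graded (B x) \<and> R x \<cdot>\<^sub>Q B x = Q) F"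
  shows "coeffwise_tendsto (\<lambda>x. R x j) (Q j) F"
proof (induction j rule: less_induct)
  case (less j)
  show ?case unfolding coeffwise_tendsto_def
  proof
    fix k
    let ?solve = "\<lambda>b r. (coeff (Q j) k - (\<Sum>i<j. coeff b i * coeff (r i) k)) / coeff b j"
    have "((\<lambda>x. ?solve (B x j) (R x)) \<longlongrightarrow> ?solve (qE j) Q) F"
      using less B unfolding coeffwise_tendsto_def
      by (intro tendsto_divide tendsto_diff tendsto_sum tendsto_mult tendsto_const)
        (auto simp del: coeff_monom simp: qE_def, simp)
    moreover have "?solve (qE j) Q = coeff (Q j) k"
      by (simp add: qE_def coeff_monom)
    moreover have "eventually (\<lambda>x. ?solve (B x j) (R x) = coeff (R x j) k) F"
      using RB
    proof (rule eventually_mono, elim conjE)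
      fix x assume "graded (B x)" and RBx: "R x \<cdot>\<^sub>Q B x = Q"
      then have dB: "degree (B x j) = j" and cB: "coeff (B x j) j \<noteq> 0"
        by (auto simp: graded_def)
      have "Q j = (\<Sum>i\<in>insert j {..<j}. smult (coeff (B x j) i) (R x i))"
        unfolding RBx[symmetric] qmul_apply qapply_def dB by (rule sum.cong) auto
      then have "coeff (Q j) k
          = coeff (B x j) j * coeff (R x j) k + (\<Sum>i<j. coeff (B x j) i * coeff (R x i) k)"
        by (simp add: coeff_sum)
      then show "?solve (B x j) (R x) = coeff (R x j) k"
        using cB by (simp add: field_simps)
    qed
    ultimately show "((\<lambda>x. coeff (R x j) k) \<longlongrightarrow> coeff (Q j) k) F"
      by (simp add: Lim_transform_eventually)
  qed
qed

section \<open>Quadratic harnesses\<close>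

lemma conjugate_quadratic_relation:
  assumes "graded Q" "Q \<cdot>\<^sub>Q H = X \<cdot>\<^sub>Q Q" "Q \<cdot>\<^sub>Q T = Y \<cdot>\<^sub>Q Q"
    and "X \<cdot>\<^sub>Q Y -\<^sub>Q \<gamma> *\<^sub>Q (Y \<cdot>\<^sub>Q X) =
      qE +\<^sub>Q \<eta> *\<^sub>Q Y +\<^sub>Q \<theta> *\<^sub>Q X +\<^sub>Q \<sigma> *\<^sub>Q (Y \<cdot>\<^sub>Q Y) +\<^sub>Q \<tau> *\<^sub>Q (X \<cdot>\<^sub>Q X)"
  shows "H \<cdot>\<^sub>Q T -\<^sub>Q \<gamma> *\<^sub>Q (T \<cdot>\<^sub>Q H) =
      qE +\<^sub>Q \<theta> *\<^sub>Q H +\<^sub>Q \<eta> *\<^sub>Q T +\<^sub>Q \<tau> *\<^sub>Q (H \<cdot>\<^sub>Q H) +\<^sub>Q \<sigma> *\<^sub>Q (T \<cdot>\<^sub>Q T)"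
    (is "?lhs = ?rhs")
proof (rule graded_qmul_cancel_left[OF assms(1)])
  have H: "Q \<cdot>\<^sub>Q (H \<cdot>\<^sub>Q Z) = X \<cdot>\<^sub>Q (Q \<cdot>\<^sub>Q Z)"
    and T: "Q \<cdot>\<^sub>Q (T \<cdot>\<^sub>Q Z) = Y \<cdot>\<^sub>Q (Q \<cdot>\<^sub>Q Z)" for Z
    by (simp_all add: qmul_assoc[symmetric] assms(2,3))
  have "Q \<cdot>\<^sub>Q ?lhs = (X \<cdot>\<^sub>Q Y -\<^sub>Q \<gamma> *\<^sub>Q (Y \<cdot>\<^sub>Q X)) \<cdot>\<^sub>Q Q"
    by (simp add: qmul_distribs H T assms(2,3) qmul_assoc)
  also have "\<dots> = Q \<cdot>\<^sub>Q ?rhs"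
    unfolding assms(4)
    by (simp add: qmul_distribs H T assms(2,3) qmul_assoc qmul_qE_left qmul_qE_right)
      (simp add: fun_eq_iff qadd_def add_ac)
  finally show "Q \<cdot>\<^sub>Q ?lhs = Q \<cdot>\<^sub>Q ?rhs" .
qed

lemma intertwining_difference_quotient:
  assumes "Q = R \<cdot>\<^sub>Q B" "Q \<cdot>\<^sub>Q qF = (qF +\<^sub>Q t *\<^sub>Q X) \<cdot>\<^sub>Q Q"
    and "R \<cdot>\<^sub>Q qF = (qF +\<^sub>Q (t - h) *\<^sub>Q X) \<cdot>\<^sub>Q R" "h \<noteq> 0"
  shows "R \<cdot>\<^sub>Q qF_commutator ((1/h) *\<^sub>Q (B -\<^sub>Q qE)) = X \<cdot>\<^sub>Q Q"
proof -
  have BF: "R \<cdot>\<^sub>Q (B \<cdot>\<^sub>Q qF) = qF \<cdot>\<^sub>Q Q +\<^sub>Q t *\<^sub>Q (X \<cdot>\<^sub>Q Q)"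
    using assms(2) by (simp add: assms(1) qmul_assoc qmul_distribs)
  have FB: "R \<cdot>\<^sub>Q (qF \<cdot>\<^sub>Q B) = qF \<cdot>\<^sub>Q Q +\<^sub>Q (t - h) *\<^sub>Q (X \<cdot>\<^sub>Q Q)"
    by (simp add: qmul_assoc[symmetric] assms(1,3)) (simp add: qmul_assoc qmul_distribs)
  have "qF_commutator ((1/h) *\<^sub>Q (B -\<^sub>Q qE)) = (1/h) *\<^sub>Q (B \<cdot>\<^sub>Q qF -\<^sub>Q qF \<cdot>\<^sub>Q B)"
    by (simp add: qF_commutator_def qmul_distribs qmul_qE_left qmul_qE_right)
      (simp add: fun_eq_iff qscale_def qsub_def smult_diff_right)
  then have "R \<cdot>\<^sub>Q qF_commutator ((1/h) *\<^sub>Q (B -\<^sub>Q qE))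
      = (1/h) *\<^sub>Q (R \<cdot>\<^sub>Q (B \<cdot>\<^sub>Q qF) -\<^sub>Q R \<cdot>\<^sub>Q (qF \<cdot>\<^sub>Q B))"
    by (simp add: qmul_distribs)
  also have "\<dots> = X \<cdot>\<^sub>Q Q"
    unfolding BF FB using assms(4)
    by (simp add: fun_eq_iff qscale_def qsub_def qadd_def smult_diff_left)
  finally show ?thesis .
qed

lemma polynomial_process_graded:
  "polynomial_process P \<Longrightarrow> 0 \<le> s \<Longrightarrow> s \<le> u \<Longrightarrow> graded (P s u)"
  by (simp add: polynomial_process_def graded_def)

lemma polynomial_process_qmul:
  "polynomial_process P \<Longrightarrow> 0 \<le> s \<Longrightarrow> s \<le> u \<Longrightarrow> u \<le> v \<Longrightarrow> P s u \<cdot>\<^sub>Q P u v = P s v"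
  by (simp add: polynomial_process_def)

lemma generator_intertwining:
  assumes P: "polynomial_process P" and A: "is_generator P A" and "t > 0"
    and X: "\<And>s. s \<ge> 0 \<Longrightarrow> P 0 s \<cdot>\<^sub>Q qF = (qF +\<^sub>Q s *\<^sub>Q X) \<cdot>\<^sub>Q P 0 s"
  shows "P 0 t \<cdot>\<^sub>Q qF_commutator (A t) = X \<cdot>\<^sub>Q P 0 t"
proof
  fix n
  define C where "C h = (1/h) *\<^sub>Q (P (t - h) t -\<^sub>Q qE)" for h
  have small: "eventually (\<lambda>h. 0 < h \<and> h < t) (at_right (0::real))"
    unfolding eventually_at_right_field using \<open>t > 0\<close> by blast
  have C_lim: "coeffwise_tendsto (\<lambda>h. C h m) (A t m) (at_right 0)" for m
    using A \<open>t > 0\<close> by (simp add: is_generator_def coeffwise_tendsto_def C_def qscale_def qsub_def)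
  have C_degree: "eventually (\<lambda>h. degree (C h m) \<le> m) (at_right 0)" for m
    using small
  proof (rule eventually_mono)
    fix h assume "0 < h \<and> h < t"
    then have "degree (P (t - h) t m - qE m) \<le> m"
      using polynomial_process_graded[OF P, of "t - h" t]
      by (intro degree_diff_le) (auto simp: graded_def qE_def degree_monom_eq)
    then show "degree (C h m) \<le> m"
      unfolding C_def qscale_def qsub_def using degree_smult_le order_trans by blast
  qed
  have "coeffwise_tendsto (\<lambda>h. P (t - h) t m) (qE m) (at_right 0)" for m
    using C_lim[of m] unfolding C_def qscale_def qsub_def
    by (rule coeffwise_tendsto_of_difference_quotient)
  moreover have "eventually (\<lambda>h. graded (P (t - h) t) \<and> P 0 (t - h) \<cdot>\<^sub>Q P (t - h) t = P 0 t)
      (at_right 0)"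
    using small by (rule eventually_mono)
      (simp add: polynomial_process_graded[OF P] polynomial_process_qmul[OF P])
  ultimately have "coeffwise_tendsto (\<lambda>h. P 0 (t - h) j) (P 0 t j) (at_right 0)" for j
    by (rule coeffwise_tendsto_graded_inverse)
  then have "coeffwise_tendsto (\<lambda>h. qapply (P 0 (t - h)) (qF_commutator (C h) n))
      (qapply (P 0 t) (qF_commutator (A t) n)) (at_right 0)"
    using C_lim eventually_conj[OF C_degree[of n] C_degree[of "Suc n"]]
    by (intro coeffwise_tendsto_qapply coeffwise_tendsto_qF_commutator)
      (auto elim!: eventually_mono intro: degree_qF_commutator_le)
  moreover have "eventually (\<lambda>h. qapply (P 0 (t - h)) (qF_commutator (C h) n) = (X \<cdot>\<^sub>Q P 0 t) n)
      (at_right 0)"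
    using small
  proof (rule eventually_mono)
    fix h assume "0 < h \<and> h < t"
    then have "P 0 (t - h) \<cdot>\<^sub>Q qF_commutator (C h) = X \<cdot>\<^sub>Q P 0 t"
      unfolding C_def using \<open>t > 0\<close>
      by (intro intertwining_difference_quotient[where t = t] X)
        (simp_all add: polynomial_process_qmul[OF P])
    then show "qapply (P 0 (t - h)) (qF_commutator (C h) n) = (X \<cdot>\<^sub>Q P 0 t) n"
      by (metis qmul_apply)
  qed
  ultimately show "(P 0 t \<cdot>\<^sub>Q qF_commutator (A t)) n = (X \<cdot>\<^sub>Q P 0 t) n"
    unfolding qmul_apply by (rule coeffwise_tendsto_eventually_const[OF trivial_limit_at_right_real])
qed

theorem theorem2p1:
  fixes P :: "real \<Rightarrow> real \<Rightarrow> qseq" and A :: "real \<Rightarrow> qseq"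
    and \<eta> \<theta> \<sigma> \<tau> \<gamma> t :: real
  assumes "quadratic_harness P \<eta> \<theta> \<sigma> \<tau> \<gamma>"
    and "is_generator P A"
    and "t > 0"
  shows "let H = A t \<cdot>\<^sub>Q qF -\<^sub>Q qF \<cdot>\<^sub>Q A t;
             T = qF -\<^sub>Q t *\<^sub>Q H
         in H \<cdot>\<^sub>Q T -\<^sub>Q \<gamma> *\<^sub>Q (T \<cdot>\<^sub>Q H) =
            qE +\<^sub>Q \<theta> *\<^sub>Q H +\<^sub>Q \<eta> *\<^sub>Q T +\<^sub>Q \<tau> *\<^sub>Q (H \<cdot>\<^sub>Q H) +\<^sub>Q \<sigma> *\<^sub>Q (T \<cdot>\<^sub>Q T)"
proof -
  obtain X where P: "polynomial_process P"
    and X: "\<And>s. s \<ge> 0 \<Longrightarrow> P 0 s \<cdot>\<^sub>Q qF = (qF +\<^sub>Q s *\<^sub>Q X) \<cdot>\<^sub>Q P 0 s"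
    and relation: "X \<cdot>\<^sub>Q qF -\<^sub>Q \<gamma> *\<^sub>Q (qF \<cdot>\<^sub>Q X) =
      qE +\<^sub>Q \<eta> *\<^sub>Q qF +\<^sub>Q \<theta> *\<^sub>Q X +\<^sub>Q \<sigma> *\<^sub>Q (qF \<cdot>\<^sub>Q qF) +\<^sub>Q \<tau> *\<^sub>Q (X \<cdot>\<^sub>Q X)"
    using assms(1) unfolding quadratic_harness_def by blast
  define H where "H = qF_commutator (A t)"
  have QH: "P 0 t \<cdot>\<^sub>Q H = X \<cdot>\<^sub>Q P 0 t"
    unfolding H_def using P assms(2,3) X by (rule generator_intertwining)
  have QT: "P 0 t \<cdot>\<^sub>Q (qF -\<^sub>Q t *\<^sub>Q H) = qF \<cdot>\<^sub>Q P 0 t"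
    using X[of t] assms(3)
    by (simp add: qmul_distribs QH) (simp add: fun_eq_iff qadd_def qsub_def)
  have "graded (P 0 t)"
    using P assms(3) by (simp add: polynomial_process_graded)
  from conjugate_quadratic_relation[OF this QH QT relation] show ?thesis
    by (simp add: H_def qF_commutator_def)
qed

end
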